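(* Let $n_1,n_2,d_1,d_2$ be positive integers with $1\le d_\iota\le n_\iota-1$ for $\iota=1,2$. If $\frac{d_1}{n_1}=\frac{d_2}{n_2}$ and $\binom{n_1}{d_1}=\binom{n_2}{d_2}$, then $n_1=n_2$ and $d_1=d_2$. *)

theory Defs
  imports Complex_Main
begin

end

theory Submission
  imports Defs
begin

text \<open>Write \<open>n choose d\<close> as \<open>(a + b choose a)\<close> with \<open>a = d\<close>, \<open>b = n - d\<close>; by Pascal's rule
  this is strictly increasing in \<open>a\<close> and, by symmetry, in \<open>b\<close>, as long as the other
  argument is positive. Equal ratios \<open>d\<^sub>1/n\<^sub>1 = d\<^sub>2/n\<^sub>2\<close> with \<open>n\<^sub>1 < n\<^sub>2\<close> force both
  \<open>d\<^sub>1 < d\<^sub>2\<close> and \<open>n\<^sub>1 - d\<^sub>1 < n\<^sub>2 - d\<^sub>2\<close>, hence \<open>n\<^sub>1 choose d\<^sub>1 < n\<^sub>2 choose d\<^sub>2\<close>.\<close>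

lemma binomial_strict_mono_left:
  fixes a a' b :: nat
  assumes "0 < b" and "a < a'"
  shows "(a + b choose a) < (a' + b choose a')"
proof -
  have "(k + b choose k) < (Suc k + b choose Suc k)" for k
  proof -
    have "0 < (k + b choose Suc k)" using \<open>0 < b\<close> by simp
    moreover have "(Suc k + b choose Suc k) = (k + b choose k) + (k + b choose Suc k)" by simp
    ultimately show ?thesis by linarith
  qed
  then show ?thesis
    using lift_Suc_mono_less[of "\<lambda>k. k + b choose k"] \<open>a < a'\<close> by blast
qed

lemma binomial_strict_mono_right:
  fixes a b b' :: nat
  assumes "0 < a" and "b < b'"
  shows "(a + b choose a) < (a + b' choose a)"
proof -
  have "(a + b choose a) = (b + a choose b)"
    using binomial_symmetric[of b "b + a"] by (simp add: add.commute)
  also have "\<dots> < (b' + a choose b')"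
    using binomial_strict_mono_left[OF assms] .
  also have "\<dots> = (a + b' choose a)"
    using binomial_symmetric[of b' "b' + a"] by (simp add: add.commute)
  finally show ?thesis .
qed

lemma binomial_strict_mono_both:
  fixes a a' b b' :: nat
  assumes "0 < a" and "0 < b" and "a < a'" and "b < b'"
  shows "(a + b choose a) < (a' + b' choose a')"
  using binomial_strict_mono_left[OF \<open>0 < b\<close> \<open>a < a'\<close>]
    binomial_strict_mono_right[of a' b b'] assms
  by simp

lemma proportional_less:
  fixes d1 d2 n1 n2 :: nat
  assumes "0 < d1" and "d1 * n2 = d2 * n1" and "n1 < n2"
  shows "d1 < d2"
proof -
  have "d1 * n1 < d2 * n1"
    using assms by (metis mult_strict_left_mono)
  then show ?thesis by simp
qed

lemma proportional_complement:
  fixes d1 d2 n1 n2 :: nat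
  assumes "d1 * n2 = d2 * n1"
  shows "(n1 - d1) * n2 = (n2 - d2) * n1"
proof -
  have "(n1 - d1) * n2 = n1 * n2 - d2 * n1"
    using assms by (simp add: diff_mult_distrib)
  also have "\<dots> = (n2 - d2) * n1"
    by (simp add: diff_mult_distrib2 mult.commute)
  finally show ?thesis .
qed

lemma choose_less_if_proportional:
  fixes d1 d2 n1 n2 :: nat
  assumes "0 < d1" and "d1 < n1" and "d2 < n2"
    and ratio: "d1 * n2 = d2 * n1" and "n1 < n2"
  shows "n1 choose d1 < n2 choose d2"
proof -
  have "d1 < d2"
    using proportional_less[OF \<open>0 < d1\<close> ratio \<open>n1 < n2\<close>] .
  moreover have "n1 - d1 < n2 - d2"
    using proportional_less[OF _ proportional_complement[OF ratio] \<open>n1 < n2\<close>] \<open>d1 < n1\<close>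
    by simp
  ultimately have "(d1 + (n1 - d1) choose d1) < (d2 + (n2 - d2) choose d2)"
    using binomial_strict_mono_both[of d1 "n1 - d1" d2 "n2 - d2"] \<open>0 < d1\<close> \<open>d1 < n1\<close>
    by linarith
  then show ?thesis
    using \<open>d1 < n1\<close> \<open>d2 < n2\<close> by simp
qed

theorem lemma2p8:
  fixes n1 n2 d1 d2 :: nat
  assumes "1 \<le> d1" and "d1 \<le> n1 - 1"
      and "1 \<le> d2" and "d2 \<le> n2 - 1"
      and "real d1 / real n1 = real d2 / real n2"
      and "n1 choose d1 = n2 choose d2"
  shows "n1 = n2 \<and> d1 = d2"
proof -
  have bounds: "0 < d1" "d1 < n1" "0 < d2" "d2 < n2"
    using assms(1-4) by auto
  have "real (d1 * n2) = real (d2 * n1)"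
    using assms(5) bounds by (simp add: field_simps)
  then have ratio: "d1 * n2 = d2 * n1"
    by (simp only: of_nat_eq_iff)
  have "n1 = n2"
  proof (rule linorder_cases[of n1 n2])
    assume "n1 < n2"
    then show ?thesis
      using choose_less_if_proportional[of d1 n1 d2 n2] bounds ratio assms(6) by simp
  next
    assume "n2 < n1"
    then show ?thesis
      using choose_less_if_proportional[of d2 n2 d1 n1] bounds ratio assms(6) by simp
  qed
  with ratio bounds show ?thesis by simp
qed

end
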